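(* Let $T$ be an $n$-simplex, $m\ge0$ and $k\ge 2m+1$. Then the sets $D(\texttt v,m)$, $\texttt v\in\Delta_0(T)$, and the sets $\mathbb T^\ell_{k,1}(f)\setminus D(\Delta_0(f),m)$, $f\in\Delta_\ell(T)$, $\ell=1,\dots,n$, are pairwise disjoint and their union is $\mathbb T^n_k$. Consequently $$\mathbb P_k(T)=\mathbb P_k(D(\Delta_0(T),m))\oplus\bigoplus_{\ell=1}^n\bigoplus_{f\in\Delta_\ell(T)}\mathbb P_k\big(\mathbb T^\ell_{k,1}(f)\setminus D(\Delta_0(f),m)\big).$$
   Context: $T$ has vertices $\texttt v_0,\dots,\texttt v_n$ and barycentric coordinates $\lambda_0,\dots,\lambda_n$. $\mathbb N$ includes $0$; $\mathbb T^n_k=\{\alpha\in\mathbb N^{n+1}:\sum_i\alpha_i=k\}$; $\lambda^\alpha=\prod_i\lambda_i^{\alpha_i}$; for $S\subseteq\mathbb T^n_k$, $\mathbb P_k(S)=\mathrm{span}\{\lambda^\alpha:\alpha\in S\}$. $\Delta_\ell(T)$ is the set of $\ell$-dimensional faces; a face $f$ is identified with its vertex index set $f\subseteq\{0,\dots,n\}$, $f^*$ is its complement, and $\Delta_0(f)$ is its set of vertices. $D(f,r)=\{\alpha\in\mathbb T^n_k:\sum_{i\in f^*}\alpha_i\le r\}$; for a set of vertices, $D(\Delta_0(f),m)=\bigcup_{\texttt v\in\Delta_0(f)}D(\texttt v,m)$. $\mathbb T^\ell_{k,1}(f)=\{\alpha\in\mathbb T^n_k:\alpha_i\ge1\ \forall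 i\in f,\ \alpha_i=0\ \forall i\in f^*\}$ (lattice nodes in the interior of $f$). *)

theory Defs
  imports Complex_Main
begin

text \<open>Multi-indices alpha in N^(n+1) are functions nat => nat vanishing beyond n.
  Faces of the n-simplex T are nonempty vertex index sets f, subsets of {0..n};
  an l-dimensional face has card f = l + 1.\<close>

definition multiidx :: "nat \<Rightarrow> nat \<Rightarrow> (nat \<Rightarrow> nat) set" where
  "multiidx n k = {\<alpha>. (\<forall>i>n. \<alpha> i = 0) \<and> (\<Sum>i\<le>n. \<alpha> i) = k}"

definition faces :: "nat \<Rightarrow> nat \<Rightarrow> nat set set" where
  "faces n l = {f. f \<subseteq> {..n} \<and> card f = l + 1}"

definition Dset :: "nat \<Rightarrow> nat \<Rightarrow> nat set \<Rightarrow> nat \<Rightarrow> (nat \<Rightarrow> nat) set" where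
  "Dset n k f r = {\<alpha> \<in> multiidx n k. (\<Sum>i\<in>{..n} - f. \<alpha> i) \<le> r}"

definition Dverts :: "nat \<Rightarrow> nat \<Rightarrow> nat set \<Rightarrow> nat \<Rightarrow> (nat \<Rightarrow> nat) set" where
  "Dverts n k f m = (\<Union>v\<in>f. Dset n k {v} m)"

definition Tint :: "nat \<Rightarrow> nat \<Rightarrow> nat set \<Rightarrow> (nat \<Rightarrow> nat) set" where
  "Tint n k f = {\<alpha> \<in> multiidx n k. (\<forall>i\<in>f. 1 \<le> \<alpha> i) \<and> (\<forall>i\<in>{..n} - f. \<alpha> i = 0)}"

text \<open>Points of T in barycentric coordinates (lambda_0..lambda_n), extended by 0.\<close>
definition bary :: "nat \<Rightarrow> (nat \<Rightarrow> real) set" where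
  "bary n = {x. (\<forall>i\<le>n. 0 \<le> x i) \<and> (\<forall>i>n. x i = 0) \<and> (\<Sum>i\<le>n. x i) = 1}"

definition bmono :: "nat \<Rightarrow> (nat \<Rightarrow> nat) \<Rightarrow> (nat \<Rightarrow> real) \<Rightarrow> real" where
  "bmono n \<alpha> = (\<lambda>x. if x \<in> bary n then (\<Prod>i\<le>n. x i ^ \<alpha> i) else 0)"

text \<open>P_k(S) = span of lambda^alpha, alpha in S (S is finite: a subset of T^n_k).\<close>
definition Pk :: "nat \<Rightarrow> (nat \<Rightarrow> nat) set \<Rightarrow> ((nat \<Rightarrow> real) \<Rightarrow> real) set" where
  "Pk n S = {(\<lambda>x. \<Sum>\<alpha>\<in>S. c \<alpha> * bmono n \<alpha> x) | c. True}"

end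

theory Submission
  imports Defs "HOL-Library.Disjoint_Sets" "HOL-Computational_Algebra.Polynomial"
begin

text \<open>A multi-index with \<open>|\<alpha>| = k\<close> has at most one coordinate \<open>\<ge> k - m\<close> when \<open>k > 2m\<close>, and it
  lies in \<open>D(v,m)\<close> exactly when its \<open>v\<close>-th coordinate is that large. Every other \<open>\<alpha>\<close> lies in
  the interior of the face spanned by its support, and interiors of distinct faces are
  disjoint; this gives the partition of \<open>T\<^sup>n\<^sub>k\<close>. Splitting the coefficient vector of
  a polynomial along a partition of the indices turns the partition into a sum of the
  spaces \<open>P\<^sub>k(S)\<close>, which is direct because the monomials \<open>\<lambda>\<^sup>\<alpha>\<close> with \<open>|\<alpha>| = k\<close> are
  linearly independent on \<open>T\<close>: by homogeneity this reduces to the independence of monomials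
  on the positive orthant, proved one variable at a time.\<close>

lemma power_sum_vanishing_on_pos_coeffs_eq_zero:
  fixes a :: "'b \<Rightarrow> real"
  assumes "finite S" and "\<forall>t>0. (\<Sum>\<alpha>\<in>S. a \<alpha> * t ^ e \<alpha>) = 0"
  shows "(\<Sum>\<alpha>\<in>{\<alpha>\<in>S. e \<alpha> = d}. a \<alpha>) = 0"
proof -
  define p where "p = (\<Sum>\<alpha>\<in>S. monom (a \<alpha>) (e \<alpha>))"
  have "poly p t = (\<Sum>\<alpha>\<in>S. a \<alpha> * t ^ e \<alpha>)" for t
    unfolding p_def by (simp add: poly_sum poly_monom)
  then have "{0<..} \<subseteq> {t. poly p t = 0}"
    using assms(2) by auto
  then have "p = 0"
    using poly_roots_finite infinite_Ioi[where 'a=real] finite_subset by blast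
  moreover have "coeff p d = (\<Sum>\<alpha>\<in>{\<alpha>\<in>S. e \<alpha> = d}. a \<alpha>)"
    unfolding p_def using assms(1) by (simp add: coeff_sum sum.inter_filter)
  ultimately show ?thesis by simp
qed

lemma monomial_sum_vanishing_on_pos_coeffs_eq_zero:
  fixes c :: "(nat \<Rightarrow> nat) \<Rightarrow> real"
  assumes "finite S"
    and "\<forall>x. (\<forall>i<N. 0 < x i) \<longrightarrow> (\<Sum>\<alpha>\<in>S. c \<alpha> * (\<Prod>i<N. x i ^ \<alpha> i)) = 0"
  shows "(\<Sum>\<alpha>\<in>{\<alpha>\<in>S. \<forall>i<N. \<alpha> i = \<beta> i}. c \<alpha>) = 0"
  using assms
proof (induction N arbitrary: S)
  case 0
  then show ?case by simp
next
  case (Suc N)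
  define S' where "S' = {\<alpha>\<in>S. \<alpha> N = \<beta> N}"
  have "(\<Sum>\<alpha>\<in>S'. c \<alpha> * (\<Prod>i<N. x i ^ \<alpha> i)) = 0" if x: "\<forall>i<N. 0 < x i" for x
  proof -
    have "(\<Sum>\<alpha>\<in>S. (c \<alpha> * (\<Prod>i<N. x i ^ \<alpha> i)) * t ^ \<alpha> N) = 0" if "t > 0" for t
    proof -
      have "\<forall>i<Suc N. 0 < (x(N := t)) i"
        using x \<open>t > 0\<close> by (simp add: less_Suc_eq)
      then have "(\<Sum>\<alpha>\<in>S. c \<alpha> * (\<Prod>i<Suc N. (x(N := t)) i ^ \<alpha> i)) = 0"
        using Suc.prems(2) by blast
      then show ?thesis
        by (simp add: prod.lessThan_Suc mult.assoc)
    qed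
    then have "\<forall>t>0. (\<Sum>\<alpha>\<in>S. (c \<alpha> * (\<Prod>i<N. x i ^ \<alpha> i)) * t ^ \<alpha> N) = 0"
      by blast
    from power_sum_vanishing_on_pos_coeffs_eq_zero[OF Suc.prems(1) this, of "\<beta> N"]
    show ?thesis
      unfolding S'_def .
  qed
  moreover have "finite S'"
    using Suc.prems(1) unfolding S'_def by simp
  ultimately have "(\<Sum>\<alpha>\<in>{\<alpha>\<in>S'. \<forall>i<N. \<alpha> i = \<beta> i}. c \<alpha>) = 0"
    using Suc.IH by blast
  moreover have "{\<alpha>\<in>S'. \<forall>i<N. \<alpha> i = \<beta> i} = {\<alpha>\<in>S. \<forall>i<Suc N. \<alpha> i = \<beta> i}"
    unfolding S'_def by (auto simp: less_Suc_eq)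
  ultimately show ?case by simp
qed

lemma finite_multiidx: "finite (multiidx n k)"
proof -
  have "\<alpha> i \<le> k" if "\<alpha> \<in> multiidx n k" "i \<le> n" for \<alpha> i
    using that member_le_sum[of i "{..n}" \<alpha>] by (simp add: multiidx_def)
  then have "multiidx n k \<subseteq> {\<alpha>. \<forall>i. (i \<in> {..n} \<longrightarrow> \<alpha> i \<in> {..k}) \<and> (i \<notin> {..n} \<longrightarrow> \<alpha> i = 0)}"
    by (auto simp: multiidx_def)
  then show ?thesis
    using finite_set_of_finite_funs[of "{..n}" "{..k}" 0] finite_subset by blast
qed

lemma bmono_rescaled:
  assumes pos: "\<forall>i\<le>n. 0 < y i" and \<alpha>: "\<alpha> \<in> multiidx n k"
  defines "s \<equiv> \<Sum>i\<le>n. y i"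
  shows "bmono n \<alpha> (\<lambda>i. if i \<le> n then y i / s else 0) = (\<Prod>i\<le>n. y i ^ \<alpha> i) / s ^ k"
proof -
  have "s > 0"
    unfolding s_def using pos by (intro sum_pos) auto
  then have "(\<Sum>i\<le>n. y i / s) = 1"
    by (simp add: sum_divide_distrib[symmetric] s_def)
  then have "(\<lambda>i. if i \<le> n then y i / s else 0) \<in> bary n"
    unfolding bary_def using pos \<open>s > 0\<close> by (auto intro!: divide_nonneg_pos less_imp_le)
  then have "bmono n \<alpha> (\<lambda>i. if i \<le> n then y i / s else 0) = (\<Prod>i\<le>n. (y i / s) ^ \<alpha> i)"
    unfolding bmono_def by simp
  also have "\<dots> = (\<Prod>i\<le>n. y i ^ \<alpha> i) / s ^ (\<Sum>i\<le>n. \<alpha> i)"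
    by (simp add: power_divide prod_dividef power_sum)
  finally show ?thesis
    using \<alpha> by (simp add: multiidx_def)
qed

lemma bmono_linear_independent:
  assumes S: "S \<subseteq> multiidx n k"
    and vanish: "\<forall>x. (\<Sum>\<alpha>\<in>S. c \<alpha> * bmono n \<alpha> x) = 0"
    and "\<beta> \<in> S"
  shows "c \<beta> = 0"
proof -
  have finite_S: "finite S"
    using S finite_multiidx finite_subset by blast
  have "(\<Sum>\<alpha>\<in>S. c \<alpha> * (\<Prod>i<Suc n. y i ^ \<alpha> i)) = 0" if pos: "\<forall>i<Suc n. 0 < y i" for y
  proof -
    define s where "s = (\<Sum>i\<le>n. y i)"
    have "s > 0"
      unfolding s_def using pos by (intro sum_pos) auto
    have "0 = (\<Sum>\<alpha>\<in>S. c \<alpha> * bmono n \<alpha> (\<lambda>i. if i \<le> n then y i / s else 0))"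
      using vanish by simp
    also have "\<dots> = (\<Sum>\<alpha>\<in>S. c \<alpha> * (\<Prod>i\<le>n. y i ^ \<alpha> i) / s ^ k)"
    proof (intro sum.cong refl)
      fix \<alpha> assume "\<alpha> \<in> S"
      then have "\<alpha> \<in> multiidx n k"
        using S by blast
      moreover have "\<forall>i\<le>n. 0 < y i"
        using pos by (simp add: less_Suc_eq_le)
      ultimately show "c \<alpha> * bmono n \<alpha> (\<lambda>i. if i \<le> n then y i / s else 0) = c \<alpha> * (\<Prod>i\<le>n. y i ^ \<alpha> i) / s ^ k"
        using bmono_rescaled unfolding s_def by simp
    qed
    also have "\<dots> = (\<Sum>\<alpha>\<in>S. c \<alpha> * (\<Prod>i<Suc n. y i ^ \<alpha> i)) / s ^ k"
      by (simp add: sum_divide_distrib lessThan_Suc_atMost)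
    finally show ?thesis
      using \<open>s > 0\<close> by simp
  qed
  then have "(\<Sum>\<alpha>\<in>{\<alpha>\<in>S. \<forall>i<Suc n. \<alpha> i = \<beta> i}. c \<alpha>) = 0"
    using monomial_sum_vanishing_on_pos_coeffs_eq_zero[OF finite_S] by blast
  moreover have "{\<alpha>\<in>S. \<forall>i<Suc n. \<alpha> i = \<beta> i} = {\<beta>}"
  proof safe
    fix \<alpha> assume "\<alpha> \<in> S" and agree: "\<forall>i<Suc n. \<alpha> i = \<beta> i"
    then have "\<alpha> \<in> multiidx n k" "\<beta> \<in> multiidx n k"
      using S \<open>\<beta> \<in> S\<close> by blast+
    show "\<alpha> = \<beta>"
    proof
      fix i
      show "\<alpha> i = \<beta> i"
        using \<open>\<alpha> \<in> multiidx n k\<close> \<open>\<beta> \<in> multiidx n k\<close> agree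
        by (cases "i \<le> n") (auto simp: multiidx_def)
    qed
  qed (use \<open>\<beta> \<in> S\<close> in auto)
  ultimately show ?thesis by simp
qed

lemma Pk_family_common_coeffs:
  assumes disj: "disjoint_family_on B J" and p: "\<forall>j\<in>J. p j \<in> Pk n (B j)"
  obtains c where "\<forall>j\<in>J. p j = (\<lambda>x. \<Sum>\<alpha>\<in>B j. c \<alpha> * bmono n \<alpha> x)"
proof -
  have "\<forall>j\<in>J. \<exists>C. p j = (\<lambda>x. \<Sum>\<alpha>\<in>B j. C \<alpha> * bmono n \<alpha> x)"
    using p unfolding Pk_def by blast
  then obtain C where C: "\<forall>j\<in>J. p j = (\<lambda>x. \<Sum>\<alpha>\<in>B j. C j \<alpha> * bmono n \<alpha> x)"
    by metis
  define c where "c \<alpha> = C (SOME j. j \<in> J \<and> \<alpha> \<in> B j) \<alpha>" for \<alpha>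
  have "c \<alpha> = C j \<alpha>" if "j \<in> J" "\<alpha> \<in> B j" for j \<alpha>
  proof -
    have "(SOME j. j \<in> J \<and> \<alpha> \<in> B j) = j"
      using disj that unfolding disjoint_family_on_def by (intro some_equality) blast+
    then show ?thesis
      unfolding c_def by simp
  qed
  then have "\<forall>j\<in>J. p j = (\<lambda>x. \<Sum>\<alpha>\<in>B j. c \<alpha> * bmono n \<alpha> x)"
    using C by simp
  then show thesis ..
qed

lemma Pk_UN_disjoint:
  assumes "finite J" and "\<forall>j\<in>J. finite (B j)" and "disjoint_family_on B J"
  shows "Pk n (\<Union>j\<in>J. B j) = {(\<lambda>x. \<Sum>j\<in>J. p j x) | p. \<forall>j\<in>J. p j \<in> Pk n (B j)}"
proof -
  have UN_sum: "(\<Sum>\<alpha>\<in>(\<Union>j\<in>J. B j). c \<alpha> * bmono n \<alpha> x) = (\<Sum>j\<in>J. \<Sum>\<alpha>\<in>B j. c \<alpha> * bmono n \<alpha> x)"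
    for c x
    using assms by (rule sum.UNION_disjoint_family)
  show ?thesis
  proof safe
    fix q assume "q \<in> Pk n (\<Union>j\<in>J. B j)"
    then obtain c where "q = (\<lambda>x. \<Sum>\<alpha>\<in>(\<Union>j\<in>J. B j). c \<alpha> * bmono n \<alpha> x)"
      unfolding Pk_def by blast
    then have "q = (\<lambda>x. \<Sum>j\<in>J. \<Sum>\<alpha>\<in>B j. c \<alpha> * bmono n \<alpha> x)"
      by (simp add: UN_sum)
    moreover have "\<forall>j\<in>J. (\<lambda>x. \<Sum>\<alpha>\<in>B j. c \<alpha> * bmono n \<alpha> x) \<in> Pk n (B j)"
      unfolding Pk_def by blast
    ultimately show "\<exists>p. q = (\<lambda>x. \<Sum>j\<in>J. p j x) \<and> (\<forall>j\<in>J. p j \<in> Pk n (B j))"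
      by (intro exI[of _ "\<lambda>j x. \<Sum>\<alpha>\<in>B j. c \<alpha> * bmono n \<alpha> x"]) simp
  next
    fix p assume "\<forall>j\<in>J. p j \<in> Pk n (B j)"
    then obtain c where "\<forall>j\<in>J. p j = (\<lambda>x. \<Sum>\<alpha>\<in>B j. c \<alpha> * bmono n \<alpha> x)"
      using Pk_family_common_coeffs assms(3) by blast
    then have "(\<lambda>x. \<Sum>j\<in>J. p j x) = (\<lambda>x. \<Sum>\<alpha>\<in>(\<Union>j\<in>J. B j). c \<alpha> * bmono n \<alpha> x)"
      by (simp add: UN_sum)
    then show "(\<lambda>x. \<Sum>j\<in>J. p j x) \<in> Pk n (\<Union>j\<in>J. B j)"
      unfolding Pk_def by blast
  qed
qed

lemma Pk_disjoint_sum_eq_zero: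
  assumes "finite J" and "disjoint_family_on B J" and sub: "(\<Union>j\<in>J. B j) \<subseteq> multiidx n k"
    and p: "\<forall>j\<in>J. p j \<in> Pk n (B j)" and zero: "(\<lambda>x. \<Sum>j\<in>J. p j x) = (\<lambda>x. 0)"
    and "j \<in> J"
  shows "p j = (\<lambda>x. 0)"
proof -
  obtain c where c: "\<forall>j\<in>J. p j = (\<lambda>x. \<Sum>\<alpha>\<in>B j. c \<alpha> * bmono n \<alpha> x)"
    using Pk_family_common_coeffs assms(2) p by blast
  have finite_B: "\<forall>j\<in>J. finite (B j)"
    using sub finite_subset[OF _ finite_multiidx] by blast
  have "(\<Sum>\<alpha>\<in>(\<Union>j\<in>J. B j). c \<alpha> * bmono n \<alpha> x) = (\<Sum>j\<in>J. \<Sum>\<alpha>\<in>B j. c \<alpha> * bmono n \<alpha> x)"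
    for x
    using assms(1) finite_B assms(2) by (rule sum.UNION_disjoint_family)
  also have "\<dots> x = (\<Sum>j\<in>J. p j x)" for x
    using c by simp
  also have "\<dots> x = 0" for x
    using fun_cong[OF zero] .
  finally have "\<forall>\<alpha>\<in>(\<Union>j\<in>J. B j). c \<alpha> = 0"
    using bmono_linear_independent[OF sub] by blast
  then show ?thesis
    using c \<open>j \<in> J\<close> by simp
qed

lemma Dset_vertex_iff:
  assumes "v \<le> n"
  shows "\<alpha> \<in> Dset n k {v} m \<longleftrightarrow> \<alpha> \<in> multiidx n k \<and> k \<le> \<alpha> v + m"
proof (cases "\<alpha> \<in> multiidx n k")
  case True
  then have "\<alpha> v + (\<Sum>i\<in>{..n} - {v}. \<alpha> i) = k"
    using assms by (simp add: multiidx_def sum.remove)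
  then show ?thesis
    using True unfolding Dset_def by auto
qed (simp add: Dset_def)

lemma Dset_vertex_disjoint:
  assumes "v \<noteq> w" "v \<le> n" "w \<le> n" "2 * m < k"
  shows "Dset n k {v} m \<inter> Dset n k {w} m = {}"
proof (rule ccontr)
  assume "Dset n k {v} m \<inter> Dset n k {w} m \<noteq> {}"
  then obtain \<alpha> where \<alpha>: "\<alpha> \<in> multiidx n k" "k \<le> \<alpha> v + m" "k \<le> \<alpha> w + m"
    using Dset_vertex_iff assms by blast
  have "(\<Sum>i\<in>{v,w}. \<alpha> i) \<le> (\<Sum>i\<le>n. \<alpha> i)"
    using assms by (intro sum_mono2) auto
  then have "\<alpha> v + \<alpha> w \<le> k"
    using \<alpha> assms by (simp add: multiidx_def)
  then show False
    using \<alpha> assms by linarith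
qed

lemma Dset_vertex_Tint_disjoint:
  assumes "v \<le> n" "v \<notin> f" "m < k"
  shows "Dset n k {v} m \<inter> Tint n k f = {}"
  using assms Dset_vertex_iff[OF assms(1)] unfolding Tint_def by auto

lemma Tint_disjoint:
  assumes "f \<subseteq> {..n}" "g \<subseteq> {..n}" "f \<noteq> g"
  shows "Tint n k f \<inter> Tint n k g = {}"
proof -
  obtain i where "i \<in> f \<and> i \<notin> g \<or> i \<in> g \<and> i \<notin> f"
    using assms(3) by blast
  then show ?thesis
    using assms(1,2) unfolding Tint_def by fastforce
qed

definition node_block :: "nat \<Rightarrow> nat \<Rightarrow> nat \<Rightarrow> nat set \<Rightarrow> (nat \<Rightarrow> nat) set" where
  "node_block n k m f = (if card f = 1 then Dset n k f m else Tint n k f - Dverts n k f m)"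

lemma disjoint_family_on_node_block:
  assumes "2 * m < k"
  shows "disjoint_family_on (node_block n k m) {f. f \<subseteq> {..n} \<and> 0 < card f}"
proof -
  have vertex_case: "node_block n k m {v} \<inter> node_block n k m g = {}"
    if "v \<le> n" "g \<subseteq> {..n}" "{v} \<noteq> g" for v g
  proof (cases "card g = 1")
    case True
    then obtain w where "g = {w}"
      by (auto simp: card_1_singleton_iff)
    then show ?thesis
      using Dset_vertex_disjoint[of v w n m k] that assms by (auto simp: node_block_def)
  next
    case False
    then show ?thesis
      using Dset_vertex_Tint_disjoint[of v n g m k] that assms
      by (cases "v \<in> g") (auto simp: node_block_def Dverts_def)
  qed
  show ?thesis
    unfolding disjoint_family_on_def
  proof (intro ballI impI)
    fix f g
    assume f: "f \<in> {f. f \<subseteq> {..n} \<and> 0 < card f}" and g: "g \<in> {f. f \<subseteq> {..n} \<and> 0 < card f}"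
      and "f \<noteq> g"
    consider v where "f = {v}" | v where "g = {v}" | "card f \<noteq> 1" "card g \<noteq> 1"
      by (auto simp: card_1_singleton_iff)
    then show "node_block n k m f \<inter> node_block n k m g = {}"
    proof cases
      case 1
      then show ?thesis
        using vertex_case[of _ g] f g \<open>f \<noteq> g\<close> by auto
    next
      case 2
      then show ?thesis
        using vertex_case[of _ f] f g \<open>f \<noteq> g\<close> by auto
    next
      case 3
      then show ?thesis
        using Tint_disjoint[of f n g k] f g \<open>f \<noteq> g\<close> by (auto simp: node_block_def)
    qed
  qed
qed

lemma UN_node_block: "(\<Union>f\<in>{f. f \<subseteq> {..n} \<and> 0 < card f}. node_block n k m f) = multiidx n k"
proof
  show "(\<Union>f\<in>{f. f \<subseteq> {..n} \<and> 0 < card f}. node_block n k m f) \<subseteq> multiidx n k"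
    by (auto simp: node_block_def Dset_def Tint_def)
next
  show "multiidx n k \<subseteq> (\<Union>f\<in>{f. f \<subseteq> {..n} \<and> 0 < card f}. node_block n k m f)"
  proof
    fix \<alpha> assume \<alpha>: "\<alpha> \<in> multiidx n k"
    show "\<alpha> \<in> (\<Union>f\<in>{f. f \<subseteq> {..n} \<and> 0 < card f}. node_block n k m f)"
    proof (cases "\<exists>v\<le>n. \<alpha> \<in> Dset n k {v} m")
      case True
      then show ?thesis
        by (force simp: node_block_def)
    next
      case False
      define f where "f = {i. i \<le> n \<and> \<alpha> i \<noteq> 0}"
      have "f \<subseteq> {..n}" "finite f"
        unfolding f_def by auto
      have "\<alpha> \<in> Tint n k f"
        using \<alpha> unfolding Tint_def f_def by auto
      have not_sub: "\<not> f \<subseteq> {v}" if "v \<le> n" for v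
      proof
        assume "f \<subseteq> {v}"
        then have "(\<Sum>i\<in>{..n} - {v}. \<alpha> i) = 0"
          unfolding f_def by (intro sum.neutral) auto
        then show False
          using False \<alpha> that unfolding Dset_def by auto
      qed
      then have "f \<noteq> {}" "card f \<noteq> 1"
        using not_sub[of 0] \<open>f \<subseteq> {..n}\<close> by (auto simp: card_1_singleton_iff)
      moreover have "\<alpha> \<notin> Dverts n k f m"
        using False \<open>f \<subseteq> {..n}\<close> unfolding Dverts_def by auto
      ultimately show ?thesis
        using \<open>\<alpha> \<in> Tint n k f\<close> \<open>f \<subseteq> {..n}\<close> \<open>finite f\<close>
        by (intro UN_I[of f]) (auto simp: node_block_def)
    qed
  qed
qed

lemma Dverts_eq_UN_node_block_vertices:
  "Dverts n k {..n} m = (\<Union>f\<in>{f. f \<subseteq> {..n} \<and> card f = 1}. node_block n k m f)"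
proof -
  have "{f. f \<subseteq> {..n} \<and> card f = 1} = (\<lambda>v. {v}) ` {..n}"
    by (auto simp: card_1_singleton_iff)
  moreover have "node_block n k m {v} = Dset n k {v} m" for v
    by (simp add: node_block_def)
  ultimately show ?thesis
    unfolding Dverts_def by simp
qed

lemma UN_faces: "(\<Union>l\<in>{a..n}. faces n l) = {f. f \<subseteq> {..n} \<and> a < card f}"
proof (intro equalityI subsetI)
  fix f assume "f \<in> (\<Union>l\<in>{a..n}. faces n l)"
  then show "f \<in> {f. f \<subseteq> {..n} \<and> a < card f}"
    by (auto simp: faces_def)
next
  fix f assume f: "f \<in> {f. f \<subseteq> {..n} \<and> a < card f}"
  then have "card f \<le> Suc n"
    using card_mono[of "{..n}" f] by simp
  then have "card f - 1 \<in> {a..n}" "f \<in> faces n (card f - 1)"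
    using f by (auto simp: faces_def)
  then show "f \<in> (\<Union>l\<in>{a..n}. faces n l)"
    by blast
qed

lemma disjoint_family_on_merge:
  assumes disj: "disjoint_family_on A F" and "G \<subseteq> F"
    and merged: "B None = (\<Union>f\<in>F - G. A f)" and kept: "\<forall>g\<in>G. B (Some g) = A g"
  shows "disjoint_family_on B (insert None (Some ` G))"
    and "(\<Union>j\<in>insert None (Some ` G). B j) = (\<Union>f\<in>F. A f)"
proof -
  have "B None \<inter> B (Some g) = {}" if "g \<in> G" for g
  proof -
    have "A f \<inter> A g = {}" if "f \<in> F - G" for f
      using disjoint_family_onD[OF disj] \<open>G \<subseteq> F\<close> \<open>g \<in> G\<close> that by blast
    then show ?thesis
      using kept \<open>g \<in> G\<close> unfolding merged by auto
  qed
  then show "disjoint_family_on B (insert None (Some ` G))"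
    using disj \<open>G \<subseteq> F\<close> kept unfolding disjoint_family_on_def by (auto simp: Int_commute) blast
  show "(\<Union>j\<in>insert None (Some ` G). B j) = (\<Union>f\<in>F. A f)"
    using \<open>G \<subseteq> F\<close> by (auto simp: merged kept)
qed

theorem mainTheorem12:
  fixes n m k :: nat
  assumes hk: "k \<ge> 2 * m + 1"
  defines "A \<equiv> (\<lambda>f. if card f = 1 then Dset n k f m else Tint n k f - Dverts n k f m)"
    and "F \<equiv> (\<Union>l\<in>{0..n}. faces n l)"
    and "J \<equiv> insert None (Some ` (\<Union>l\<in>{1..n}. faces n l))"
    and "B \<equiv> (\<lambda>j. case j of None \<Rightarrow> Dverts n k {..n} m
                        | Some f \<Rightarrow> Tint n k f - Dverts n k f m)"
  shows "(\<forall>f\<in>F. \<forall>g\<in>F. f \<noteq> g \<longrightarrow> A f \<inter> A g = {})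
       \<and> (\<Union>f\<in>F. A f) = multiidx n k
       \<and> Pk n (multiidx n k) = {(\<lambda>x. \<Sum>j\<in>J. p j x) | p. \<forall>j\<in>J. p j \<in> Pk n (B j)}
       \<and> (\<forall>p. (\<forall>j\<in>J. p j \<in> Pk n (B j)) \<and> (\<lambda>x. \<Sum>j\<in>J. p j x) = (\<lambda>x. 0)
              \<longrightarrow> (\<forall>j\<in>J. p j = (\<lambda>x. 0)))"
proof -
  define G where "G = {f. f \<subseteq> {..n} \<and> 1 < card f}"
  have F: "F = {f. f \<subseteq> {..n} \<and> 0 < card f}" and J: "J = insert None (Some ` G)"
    unfolding F_def J_def G_def by (simp_all only: UN_faces)
  have A: "A = node_block n k m"
    unfolding A_def by (simp add: fun_eq_iff node_block_def)
  have disjA: "disjoint_family_on A F" and unA: "(\<Union>f\<in>F. A f) = multiidx n k"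
    using hk disjoint_family_on_node_block[of m k n] UN_node_block[of n k m] unfolding A F by simp_all
  have "F - G = {f. f \<subseteq> {..n} \<and> card f = 1}"
    unfolding F G_def by auto
  then have merged: "B None = (\<Union>f\<in>F - G. A f)"
    unfolding A B_def by (simp add: Dverts_eq_UN_node_block_vertices)
  have kept: "\<forall>g\<in>G. B (Some g) = A g"
    unfolding A B_def G_def node_block_def by simp
  have "G \<subseteq> F"
    unfolding F G_def by auto
  have disjB: "disjoint_family_on B J" and unB: "(\<Union>j\<in>J. B j) = multiidx n k"
    using disjoint_family_on_merge[OF disjA \<open>G \<subseteq> F\<close> merged kept] unA unfolding J by simp_all
  have finJ: "finite J"
    unfolding J G_def by (auto intro: finite_subset[of _ "Pow {..n}"])
  have finB: "\<forall>j\<in>J. finite (B j)"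
    using unB finite_multiidx by (metis UN_upper finite_subset)
  have indep: "\<forall>j\<in>J. p j = (\<lambda>x. 0)"
    if "(\<forall>j\<in>J. p j \<in> Pk n (B j)) \<and> (\<lambda>x. \<Sum>j\<in>J. p j x) = (\<lambda>x. 0)" for p
    using Pk_disjoint_sum_eq_zero[OF finJ disjB equalityD1[OF unB]] that by blast
  show ?thesis
    using disjA[unfolded disjoint_family_on_def] unA Pk_UN_disjoint[OF finJ finB disjB, unfolded unB] indep
    by (intro conjI allI impI) assumption+
qed

end
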